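(* Let $I\in\mathcal I$ and let $(c_m)_m$ be a sequence in $N$. Then there exist a subsequence $(c_k)_k$ and elements $\gamma_k\in\Gamma_I$, $b_k\in N$ such that $c_k=\gamma_k b_k$ for every $k$ and the sequence $(b_k)$ converges to an element $b\in N$ (in the topology of $N\subset T^d$).
   Context: Let $\mathfrak d$ be an $n$-dimensional real vector space. A quasilattice in $\mathfrak d$ is the $\mathbb Z$-submodule generated by a finite set of vectors spanning $\mathfrak d$. Let $\Delta\subset\mathfrak d^*$ be an $n$-dimensional convex polytope with $d$ facets, $\Delta=\bigcap_{j=1}^d\{\mu:\langle\mu,X_j\rangle\ge\lambda_j\}$, with chosen inward normals $X_1,\dots,X_d\in\mathfrak d$, and let $Q$ be a quasilattice containing the $X_j$. For each face $F$ let $I_F=\{j:\langle\mu,X_j\rangle=\lambda_j \text{ on } F\}$. Let $\pi:\mathbb R^d\to\mathfrak d$, $e_j\mapsto X_j$; $T^d=\mathbb R^d/\mathbb Z^d$ with projection $\exp$; $N=\ker(T^d\to\mathfrak d/Q)$ (induced by $\pi$). For $J\subseteq\{1,\dots,d\}$, $T^J=\exp(\mathbb R^J)$ where $\mathbb R^J$ is spanned by $e_j$, $j\in J$. $\mathcal I$ is the set of subsets $I$ such that $\{X_j:j\in I\}$ is a basis of $\mathfrak d$ and $I\subseteq I_\mu$ for some vertex $\mu$ of $\Delta$; $\Gamma_I=N\cap T^I$. *)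

theory Defs
  imports "HOL-Analysis.Analysis"
begin

text \<open>The vector space d is a Euclidean space 'a with DIM('a) = n; its dual is identified
  with 'a via the inner product, so the pairing of mu with X is mu \<bullet> X.
  Facets are indexed by a finite type 'd (so d = CARD('d)); R^d = real^'d.
  The torus T^d = R^d/Z^d is modelled as the subgroup of complex^'d of vectors with
  all coordinates of modulus one (group law = componentwise multiplication, topology =
  subspace topology); the projection exp sends x to the vector of cis(2 pi x_j).\<close>

definition int_span :: "'a::real_vector set \<Rightarrow> 'a set" where
  "int_span S = {v. \<exists>F c. finite F \<and> F \<subseteq> S \<and> v = (\<Sum>u\<in>F. of_int (c u) *\<^sub>R u)}"

definition quasilattice :: "'a::euclidean_space set \<Rightarrow> bool" where
  "quasilattice Q \<longleftrightarrow> (\<exists>S. finite S \<and> span S = UNIV \<and> Q = int_span S)"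

definition torus :: "(complex^'d) set" where
  "torus = {t. \<forall>j. cmod (t $ j) = 1}"

definition texp :: "real^'d \<Rightarrow> complex^'d" where
  "texp x = (\<chi> j. cis (2 * pi * x $ j))"

definition piX :: "('d::finite \<Rightarrow> 'a::real_vector) \<Rightarrow> real^'d \<Rightarrow> 'a" where
  "piX X x = (\<Sum>j\<in>UNIV. x $ j *\<^sub>R X j)"

text \<open>N = kernel of the map T^d \<rightarrow> d/Q induced by piX, i.e. exp(piX^{-1}(Q)).\<close>
definition kerN :: "('d::finite \<Rightarrow> 'a::real_vector) \<Rightarrow> 'a set \<Rightarrow> (complex^'d) set" where
  "kerN X Q = {t. \<exists>x. t = texp x \<and> piX X x \<in> Q}"

definition subtorus :: "'d::finite set \<Rightarrow> (complex^'d) set" where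
  "subtorus J = texp ` {x. \<forall>j. j \<notin> J \<longrightarrow> x $ j = 0}"

definition GammaI :: "('d::finite \<Rightarrow> 'a::real_vector) \<Rightarrow> 'a set \<Rightarrow> 'd set \<Rightarrow> (complex^'d) set" where
  "GammaI X Q I = kerN X Q \<inter> subtorus I"

definition polyDelta :: "('d::finite \<Rightarrow> 'a::euclidean_space) \<Rightarrow> ('d \<Rightarrow> real) \<Rightarrow> 'a set" where
  "polyDelta X lam = {\<mu>. \<forall>j. \<mu> \<bullet> X j \<ge> lam j}"

definition activeI :: "('d::finite \<Rightarrow> 'a::euclidean_space) \<Rightarrow> ('d \<Rightarrow> real) \<Rightarrow> 'a \<Rightarrow> 'd set" where
  "activeI X lam \<mu> = {j. \<mu> \<bullet> X j = lam j}"

definition basis_family :: "('d \<Rightarrow> 'a::euclidean_space) \<Rightarrow> 'd set \<Rightarrow> bool" where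
  "basis_family X I \<longleftrightarrow> inj_on X I \<and> independent (X ` I) \<and> span (X ` I) = UNIV"

definition calI :: "('d::finite \<Rightarrow> 'a::euclidean_space) \<Rightarrow> ('d \<Rightarrow> real) \<Rightarrow> 'd set set" where
  "calI X lam = {I. basis_family X I \<and>
      (\<exists>\<mu>. \<mu> extreme_point_of polyDelta X lam \<and> I \<subseteq> activeI X lam \<mu>)}"

end

theory Submission
  imports Defs
begin

text \<open>
  Write every c m as texp x m with piX X (x m) \<in> Q.  Since Q is a
  quasilattice containing all X j, shifting x m by an integer vector keeps it in
  piX\<inverse>(Q) and leaves texp x m unchanged, so x m can be taken in the unit cube;
  by compactness a subsequence converges to some l.  Because the X j, j \<in> I, form a
  basis, piX has a linear right inverse h (basis_coords) supported on the coordinates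
  in I.  Then
  x = h (piX x) + (x - h (piX x)), where texp (h (piX x)) lies in GammaI (supported
  on I and mapping into Q) and texp (x - h (piX x)) (x - h (piX x) is ker_part) lies in N since it lies over 0.
  The second factor depends continuously on x, so it converges along the subsequence.

  Of the polytope data only the fact that {X j | j \<in> I} is a basis of the
  vector space enters the argument.
\<close>

lemma int_span_finite:
  assumes "finite S"
  shows "int_span S = {v. \<exists>c. v = (\<Sum>u\<in>S. of_int (c u) *\<^sub>R u)}"
proof (intro set_eqI iffI)
  fix v assume "v \<in> int_span S"
  then obtain F c where F: "finite F" "F \<subseteq> S" "v = (\<Sum>u\<in>F. of_int (c u) *\<^sub>R u)"
    unfolding int_span_def by auto
  let ?c = "\<lambda>u. if u \<in> F then c u else 0"
  have "(\<Sum>u\<in>S. of_int (?c u) *\<^sub>R u) = (\<Sum>u\<in>F. of_int (?c u) *\<^sub>R u)"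
    using F assms by (intro sum.mono_neutral_right) auto
  also have "\<dots> = v" using F by simp
  finally show "v \<in> {v. \<exists>c. v = (\<Sum>u\<in>S. of_int (c u) *\<^sub>R u)}" by (auto intro!: exI[of _ ?c])
next
  fix v assume "v \<in> {v. \<exists>c. v = (\<Sum>u\<in>S. of_int (c u) *\<^sub>R u)}"
  then show "v \<in> int_span S" unfolding int_span_def using assms by blast
qed

lemma int_span_diff:
  assumes "finite S" "a \<in> int_span S" "b \<in> int_span S"
  shows "a - b \<in> int_span S"
proof -
  obtain ca cb where "a = (\<Sum>u\<in>S. of_int (ca u) *\<^sub>R u)" "b = (\<Sum>u\<in>S. of_int (cb u) *\<^sub>R u)"
    using assms by (auto simp: int_span_finite)
  then show ?thesis using assms(1)
    by (auto simp: int_span_finite sum_subtractf scaleR_diff_left intro!: exI[of _ "\<lambda>u. ca u - cb u"])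
qed

lemma int_span_int_combination:
  assumes "finite S" "finite A" "\<And>i. i \<in> A \<Longrightarrow> v i \<in> int_span S"
  shows "(\<Sum>i\<in>A. of_int (n i) *\<^sub>R v i) \<in> int_span S"
proof -
  have "\<forall>i\<in>A. \<exists>c. v i = (\<Sum>u\<in>S. of_int (c u) *\<^sub>R u)"
    using assms by (auto simp: int_span_finite)
  then obtain c where c: "\<And>i. i \<in> A \<Longrightarrow> v i = (\<Sum>u\<in>S. of_int (c i u) *\<^sub>R u)"
    by metis
  have "(\<Sum>i\<in>A. of_int (n i) *\<^sub>R v i) = (\<Sum>i\<in>A. \<Sum>u\<in>S. of_int (n i * c i u) *\<^sub>R u)"
    by (simp add: c scaleR_sum_right)
  also have "\<dots> = (\<Sum>u\<in>S. of_int (\<Sum>i\<in>A. n i * c i u) *\<^sub>R u)"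
    by (subst sum.swap) (simp add: scaleR_sum_left)
  finally show ?thesis using assms(1)
    by (auto simp: int_span_finite intro!: exI[of _ "\<lambda>u. \<Sum>i\<in>A. n i * c i u"])
qed

lemma texp_add: "texp (a + b) = texp a * texp b"
  by (simp add: texp_def vec_eq_iff cis_mult distrib_left)

lemma continuous_on_texp: "continuous_on A texp"
  unfolding texp_def by (intro continuous_on_vec_lambda continuous_intros)

lemma texp_int_shift: "texp (x - (\<chi> j. of_int (k j))) = texp x"
proof -
  have "cis (2 * pi * of_int (- k j)) = 1" for j
    by (rule cis_multiple_2pi) simp
  then have "texp (- (\<chi> j. of_int (k j))) = 1"
    by (simp add: texp_def vec_eq_iff)
  then show ?thesis by (metis diff_conv_add_uminus texp_add mult_1_right)
qed

lemma linear_piX: "linear (piX X)"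
  by (auto intro!: linearI simp: piX_def sum.distrib scaleR_add_left scaleR_sum_right)

text \<open>Every point of N has a preimage under texp in the unit cube lying over Q,
  obtained by subtracting the integer parts of any preimage.\<close>
lemma kerN_rep_in_cube:
  fixes X :: "'d::finite \<Rightarrow> 'a::euclidean_space"
  assumes "finite S" "Q = int_span S" "\<And>j. X j \<in> Q" "t \<in> kerN X Q"
  obtains x where "x \<in> cbox 0 1" "texp x = t" "piX X x \<in> Q"
proof -
  obtain y where y: "t = texp y" "piX X y \<in> Q" using assms(4) unfolding kerN_def by auto
  define k where "k j = floor (y $ j)" for j
  define x where "x = y - (\<chi> j. of_int (k j))"
  have "x \<in> cbox 0 1"
    by (simp add: x_def k_def mem_box_cart frac_def[symmetric] frac_ge_0 less_imp_le[OF frac_lt_1])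
  moreover have "texp x = t" unfolding x_def y by (rule texp_int_shift)
  moreover have "piX X x = piX X y - (\<Sum>j\<in>UNIV. of_int (k j) *\<^sub>R X j)"
    unfolding x_def linear_diff[OF linear_piX] by (simp add: piX_def)
  then have "piX X x \<in> Q"
    using assms y(2) by (simp add: int_span_diff int_span_int_combination)
  ultimately show thesis using that by blast
qed

text \<open>If the X j, j \<in> I, form a basis, sending v to its coordinates in that basis
  (placed in the I-slots of real^'d) is a linear right inverse of piX.\<close>
definition basis_coords :: "('d::finite \<Rightarrow> 'a::euclidean_space) \<Rightarrow> 'd set \<Rightarrow> 'a \<Rightarrow> real^'d" where
  "basis_coords X I v = (\<chi> j. if j \<in> I then representation (X ` I) v (X j) else 0)"

lemma basis_coords_outside: "j \<notin> I \<Longrightarrow> basis_coords X I v $ j = 0"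
  by (simp add: basis_coords_def)

lemma linear_basis_coords:
  assumes "basis_family X I"
  shows "linear (basis_coords X I)"
  using assms unfolding basis_family_def basis_coords_def
  by (auto intro!: linearI simp: vec_eq_iff representation_add representation_scale)

lemma piX_basis_coords:
  assumes "basis_family X I"
  shows "piX X (basis_coords X I v) = v"
proof -
  have inj: "inj_on X I" and ind: "independent (X ` I)" and sp: "span (X ` I) = UNIV"
    using assms unfolding basis_family_def by auto
  have "piX X (basis_coords X I v) = (\<Sum>j\<in>I. representation (X ` I) v (X j) *\<^sub>R X j)"
    unfolding piX_def basis_coords_def by (rule sum.mono_neutral_cong_right) auto
  also have "\<dots> = (\<Sum>u\<in>X ` I. representation (X ` I) v u *\<^sub>R u)"
    by (simp add: sum.reindex[OF inj])
  also have "\<dots> = v"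
    using ind sp by (intro sum_representation_eq) (auto simp: independent_imp_finite)
  finally show ?thesis .
qed

definition ker_part :: "('d::finite \<Rightarrow> 'a::euclidean_space) \<Rightarrow> 'd set \<Rightarrow> real^'d \<Rightarrow> real^'d" where
  "ker_part X I x = x - basis_coords X I (piX X x)"

lemma continuous_on_ker_part:
  assumes "basis_family X I"
  shows "continuous_on A (ker_part X I)"
proof -
  have "linear (ker_part X I)"
    unfolding ker_part_def
    using linear_compose[OF linear_piX linear_basis_coords[OF assms]]
    by (intro linear_compose_sub linear_id[unfolded id_def]) (simp add: o_def)
  then show ?thesis by (simp add: linear_continuous_on linear_conv_bounded_linear)
qed

lemma texp_ker_part_in_kerN:
  assumes "basis_family X I" "0 \<in> Q"
  shows "texp (ker_part X I x) \<in> kerN X Q"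
  unfolding kerN_def ker_part_def using assms
  by (auto simp: linear_diff[OF linear_piX] piX_basis_coords)

lemma kerN_split:
  fixes X :: "'d::finite \<Rightarrow> 'a::euclidean_space"
  assumes "basis_family X I" "piX X x \<in> Q"
  shows "texp (basis_coords X I (piX X x)) \<in> GammaI X Q I"
    and "texp x = texp (basis_coords X I (piX X x)) * texp (ker_part X I x)"
proof -
  show "texp (basis_coords X I (piX X x)) \<in> GammaI X Q I"
    unfolding GammaI_def kerN_def subtorus_def
    using assms by (auto simp: piX_basis_coords basis_coords_outside)
  show "texp x = texp (basis_coords X I (piX X x)) * texp (ker_part X I x)"
    unfolding ker_part_def texp_add[symmetric] by simp
qed

theorem mainTheorem2:
  fixes X :: "'d::finite \<Rightarrow> 'a::euclidean_space"
    and lam :: "'d \<Rightarrow> real"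
    and Q :: "'a set"
    and I :: "'d set"
    and c :: "nat \<Rightarrow> complex^'d"
  assumes poly: "polytope (polyDelta X lam)"
    and fulldim: "aff_dim (polyDelta X lam) = int DIM('a)"
    and facets: "\<And>j. {\<mu>\<in>polyDelta X lam. \<mu> \<bullet> X j = lam j} facet_of polyDelta X lam"
    and distinct_facets: "inj (\<lambda>j. {\<mu>\<in>polyDelta X lam. \<mu> \<bullet> X j = lam j})"
    and all_facets: "\<And>F. F facet_of polyDelta X lam \<Longrightarrow>
                       \<exists>j. F = {\<mu>\<in>polyDelta X lam. \<mu> \<bullet> X j = lam j}"
    and qlat: "quasilattice Q"
    and XQ: "\<And>j. X j \<in> Q"
    and I: "I \<in> calI X lam"
    and c: "\<And>m. c m \<in> kerN X Q"
  shows "\<exists>r \<gamma> b b0. strict_mono r \<and>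
           (\<forall>k. \<gamma> k \<in> GammaI X Q I \<and> b k \<in> kerN X Q \<and> c (r k) = \<gamma> k * b k) \<and>
           b0 \<in> kerN X Q \<and> b \<longlonglongrightarrow> b0"
proof -
  obtain S where S: "finite S" "Q = int_span S" using qlat unfolding quasilattice_def by auto
  have Q0: "0 \<in> Q" using int_span_int_combination[OF S(1) finite.emptyI] S(2) by simp
  have basis: "basis_family X I" using I unfolding calI_def by auto
  have "\<forall>m. \<exists>x. x \<in> cbox 0 1 \<and> texp x = c m \<and> piX X x \<in> Q"
    using kerN_rep_in_cube[OF S XQ c] by metis
  then obtain x where x: "\<And>m. x m \<in> cbox 0 1" "\<And>m. texp (x m) = c m" "\<And>m. piX X (x m) \<in> Q"
    by metis
  obtain l r where r: "strict_mono r" and lim: "(x \<circ> r) \<longlonglongrightarrow> l"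
    using compact_cbox[of "0::real^'d" 1] x(1) unfolding compact_def by metis
  define \<gamma> where "\<gamma> k = texp (basis_coords X I (piX X (x (r k))))" for k
  define b where "b k = texp (ker_part X I (x (r k)))" for k
  have "(\<lambda>k. (texp \<circ> ker_part X I) ((x \<circ> r) k)) \<longlonglongrightarrow> (texp \<circ> ker_part X I) l"
    using continuous_on_tendsto_compose[OF
        continuous_on_compose[OF continuous_on_ker_part[OF basis, of UNIV] continuous_on_texp] lim]
    by simp
  then have "b \<longlonglongrightarrow> texp (ker_part X I l)" unfolding b_def[abs_def] by simp
  moreover have "texp (ker_part X I l) \<in> kerN X Q"
    using texp_ker_part_in_kerN[OF basis Q0] .
  moreover have "\<gamma> k \<in> GammaI X Q I" "b k \<in> kerN X Q" "c (r k) = \<gamma> k * b k" for k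
    using kerN_split[OF basis x(3)] texp_ker_part_in_kerN[OF basis Q0] x(2)
    unfolding \<gamma>_def b_def by metis+
  ultimately show ?thesis using r by blast
qed

end
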